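(* For $k\ge 1$, rectangular reduction gives a bijection $\mathrm{red}:\mathcal M^{\Box}_{2k}\to\mathcal N_k$. In particular $M^\Box_{2k}=N_k$.
   Context: Colorings. Each square is colored water or land. Two distinct squares are adjacent if they share an edge after all edge identifications; a set of squares is connected if its induced adjacency graph is connected (empty set counts as connected). (N1): the water is connected. For an interior (non-boundary) vertex $v$, its square-degree is the number of distinct squares having $v$ as a corner. (N2$\Box$): no interior vertex of square-degree $4$ has all incident squares water. A $2\times k$ Nurikabe rectangle is a coloring of the $2\times k$ grid (no identifications) with connected water and no $2\times 2$ block of water squares; $\mathcal N_k$ is the set of these, $N_k=|\mathcal N_k|$. Tile $[0,n]\times[0,1]$ by unit squares $[j-1,j]\times[0,1]$, called square $j$. The $1\times n$ Möbius strip identifies $(x,1)\sim(n-x,0)$ for $x\in[0,n]$; its boundary is the image of the vertical sides. $\mathcal M^\Box_n$ is the set of colorings of the $1\times n$ Möbius strip satisfying (N1) and (N2$\Box$), $M^\Box_n=|\mathcal M^\Box_n|$. Rectangular reduction: for a coloring of the $1\times 2k$ Möbius strip, $\mathrm{red}$ gives the coloring of the $2\times k$ grid whose column $j$ ($1\le j\le k$) has top square colored as square $j$ and bottom square colored as square $2k+1-j$. *)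

theory Defs
  imports Main "HOL-Library.FuncSet"
begin

(* A coloring is a function from squares to bool: True = water, False = land.
   Colorings are extensional (value undefined off the square set), via PiE. *)

definition connected_set :: "('s \<Rightarrow> 's \<Rightarrow> bool) \<Rightarrow> 's set \<Rightarrow> bool" where
  "connected_set adj S \<longleftrightarrow>
     (\<forall>x\<in>S. \<forall>y\<in>S. (x, y) \<in> {(a, b). a \<in> S \<and> b \<in> S \<and> adj a b}\<^sup>*)"

definition water :: "('s \<Rightarrow> bool) \<Rightarrow> 's set \<Rightarrow> 's set" where
  "water c Sq = {s \<in> Sq. c s}"

(* ---------- 2 x k grid: squares (r, j), r = 1 top row, r = 2 bottom row, 1 <= j <= k ---------- *)

definition grid_sq :: "nat \<Rightarrow> (nat \<times> nat) set" where
  "grid_sq k = {1, 2} \<times> {1..k}"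

definition grid_adj :: "nat \<times> nat \<Rightarrow> nat \<times> nat \<Rightarrow> bool" where
  "grid_adj p q \<longleftrightarrow>
     (snd p = snd q \<and> fst p \<noteq> fst q) \<or>
     (fst p = fst q \<and> (snd q = snd p + 1 \<or> snd p = snd q + 1))"

definition Nurikabe_rect :: "nat \<Rightarrow> (nat \<times> nat \<Rightarrow> bool) set" where
  "Nurikabe_rect k =
     {c \<in> grid_sq k \<rightarrow>\<^sub>E (UNIV :: bool set).
        connected_set grid_adj (water c (grid_sq k)) \<and>
        \<not> (\<exists>j. 1 \<le> j \<and> j < k \<and> c (1, j) \<and> c (2, j) \<and> c (1, j + 1) \<and> c (2, j + 1))}"

definition N_num :: "nat \<Rightarrow> nat" where
  "N_num k = card (Nurikabe_rect k)"

(* ---------- 1 x n Moebius strip ----------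
   Square j = [j-1,j] x [0,1], 1 <= j <= n.  Identification (x,1) ~ (n-x,0).
   Edges after identification: vertical edge at x = i is VE i (these are not identified);
   the horizontal edge [a-1,a] x {0} (bottom of square a) is HE a; the top edge of square j,
   [j-1,j] x {1}, is identified with [n-j, n-j+1] x {0}, i.e. HE (n+1-j).
   Vertices after identification: (i,0) is vertex i, and (i,1) ~ (n-i,0) is vertex n-i.
   Boundary (image of the vertical sides x=0, x=n) contains exactly the vertices 0 and n. *)

datatype medge = VE nat | HE nat

definition mob_sq :: "nat \<Rightarrow> nat set" where
  "mob_sq n = {1..n}"

definition mob_edges :: "nat \<Rightarrow> nat \<Rightarrow> medge set" where
  "mob_edges n j = {VE (j - 1), VE j, HE j, HE (n + 1 - j)}"

definition mob_corners :: "nat \<Rightarrow> nat \<Rightarrow> nat set" where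
  "mob_corners n j = {j - 1, j, n - (j - 1), n - j}"

definition mob_adj :: "nat \<Rightarrow> nat \<Rightarrow> nat \<Rightarrow> bool" where
  "mob_adj n a b \<longleftrightarrow> a \<noteq> b \<and> mob_edges n a \<inter> mob_edges n b \<noteq> {}"

definition mob_interior_vertex :: "nat \<Rightarrow> nat \<Rightarrow> bool" where
  "mob_interior_vertex n v \<longleftrightarrow> 0 < v \<and> v < n"

definition mob_squares_at :: "nat \<Rightarrow> nat \<Rightarrow> nat set" where
  "mob_squares_at n v = {j \<in> mob_sq n. v \<in> mob_corners n j}"

definition Mobius_box :: "nat \<Rightarrow> (nat \<Rightarrow> bool) set" where
  "Mobius_box n =
     {c \<in> mob_sq n \<rightarrow>\<^sub>E (UNIV :: bool set).
        connected_set (mob_adj n) (water c (mob_sq n)) \<and>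
        (\<forall>v. mob_interior_vertex n v \<and> card (mob_squares_at n v) = 4 \<longrightarrow>
               \<not> (\<forall>j \<in> mob_squares_at n v. c j))}"

definition M_box_num :: "nat \<Rightarrow> nat" where
  "M_box_num n = card (Mobius_box n)"

definition red :: "nat \<Rightarrow> (nat \<Rightarrow> bool) \<Rightarrow> (nat \<times> nat \<Rightarrow> bool)" where
  "red k c = (\<lambda>(r, j). if (r, j) \<in> grid_sq k
                         then (if r = 1 then c j else c (2 * k + 1 - j))
                         else undefined)"

end

theory Submission
  imports Defs
begin

(* Folding the 1 x 2k Moebius strip in half sends square j \<le> k to the top square of
   column j and square 2k+1-j to the bottom square of column j.  This is an isomorphism
   of adjacency graphs: consecutive squares stay adjacent (squares k and k+1 across the
   fold become the two squares of column k), and the glued horizontal edges join exactly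
   the squares j and 2k+1-j of one column.  So water connectivity is preserved.  The
   interior vertices v and 2k-v are incident to the same squares, which form the 2 x 2
   block on columns min v (2k-v) and min v (2k-v) + 1; only the fold vertex k has fewer
   than four squares.  Hence (N2) becomes the absence of 2 x 2 water blocks. *)

lemma connected_set_image:
  assumes "connected_set adj W"
    and "\<And>x y. x \<in> W \<Longrightarrow> y \<in> W \<Longrightarrow> adj x y \<Longrightarrow> adj' (f x) (f y)"
  shows "connected_set adj' (f ` W)"
  unfolding connected_set_def
proof (intro ballI)
  let ?E = "{(a, b). a \<in> W \<and> b \<in> W \<and> adj a b}"
  let ?E' = "{(a, b). a \<in> f ` W \<and> b \<in> f ` W \<and> adj' a b}"
  fix a b assume "a \<in> f ` W" "b \<in> f ` W"
  then obtain x y where xy: "x \<in> W" "y \<in> W" "a = f x" "b = f y" by blast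
  from assms(1) xy have "(x, y) \<in> ?E\<^sup>*" unfolding connected_set_def by blast
  then have "(f x, f y) \<in> ?E'\<^sup>*"
  proof (induction rule: rtrancl_induct)
    case (step y z)
    then have "(f y, f z) \<in> ?E'" using assms(2) by auto
    with step.IH show ?case by (rule rtrancl_into_rtrancl)
  qed simp
  with xy show "(a, b) \<in> ?E'\<^sup>*" by simp
qed

lemma water_restrict: "water (restrict c A) A = water c A"
  by (auto simp: water_def)

lemma connected_set_water_compose_iff:
  assumes f: "bij_betw f A B"
    and adj: "\<And>x y. x \<in> A \<Longrightarrow> y \<in> A \<Longrightarrow> adj' (f x) (f y) \<longleftrightarrow> adj x y"
  shows "connected_set adj (water (c \<circ> f) A) \<longleftrightarrow> connected_set adj' (water c B)"
proof
  assume conn: "connected_set adj (water (c \<circ> f) A)"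
  have "connected_set adj' (f ` water (c \<circ> f) A)"
    using conn by (rule connected_set_image) (simp add: water_def adj)
  moreover have "f ` water (c \<circ> f) A = water c B"
    using f by (auto simp: water_def bij_betw_def)
  ultimately show "connected_set adj' (water c B)" by simp
next
  assume conn: "connected_set adj' (water c B)"
  let ?g = "inv_into A f"
  have g: "?g y \<in> A" "f (?g y) = y" if "y \<in> B" for y
    using f that by (auto simp: bij_betw_def inv_into_into f_inv_into_f)
  have "connected_set adj (?g ` water c B)"
    using conn
  proof (rule connected_set_image)
    fix x y assume "x \<in> water c B" "y \<in> water c B" "adj' x y"
    then show "adj (?g x) (?g y)"
      using adj[of "?g x" "?g y"] g by (simp add: water_def)
  qed
  moreover have "?g ` water c B = water (c \<circ> f) A"
  proof (intro equalityI subsetI)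
    fix x assume "x \<in> water (c \<circ> f) A"
    with f have "f x \<in> water c B" "?g (f x) = x"
      by (auto simp: water_def bij_betw_def)
    then show "x \<in> ?g ` water c B" by (metis image_eqI)
  next
    fix x assume "x \<in> ?g ` water c B"
    then obtain y where "y \<in> B" "c y" "x = ?g y" by (auto simp: water_def)
    with g show "x \<in> water (c \<circ> f) A" by (simp add: water_def)
  qed
  ultimately show "connected_set adj (water (c \<circ> f) A)" by simp
qed

lemma bij_betw_restrict_compose_PiE:
  assumes "bij_betw f A B"
  shows "bij_betw (\<lambda>c. restrict (c \<circ> f) A) (B \<rightarrow>\<^sub>E C) (A \<rightarrow>\<^sub>E C)"
proof (rule bij_betw_byWitness[where f' = "\<lambda>d. restrict (d \<circ> inv_into A f) B"])
  have inv: "inv_into A f y \<in> A" "f (inv_into A f y) = y" if "y \<in> B" for y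
    using assms that by (auto simp: bij_betw_def inv_into_into f_inv_into_f)
  have f: "f x \<in> B" "inv_into A f (f x) = x" if "x \<in> A" for x
    using assms that by (auto simp: bij_betw_def)
  show "\<forall>c\<in>B \<rightarrow>\<^sub>E C. restrict (restrict (c \<circ> f) A \<circ> inv_into A f) B = c"
    using inv by (auto intro!: PiE_ext)
  show "\<forall>d\<in>A \<rightarrow>\<^sub>E C. restrict (restrict (d \<circ> inv_into A f) B \<circ> f) A = d"
    using f by (auto intro!: PiE_ext)
  show "(\<lambda>c. restrict (c \<circ> f) A) ` (B \<rightarrow>\<^sub>E C) \<subseteq> A \<rightarrow>\<^sub>E C"
    using f by auto
  show "(\<lambda>d. restrict (d \<circ> inv_into A f) B) ` (A \<rightarrow>\<^sub>E C) \<subseteq> B \<rightarrow>\<^sub>E C"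
    using inv by auto
qed

lemma bij_betw_subsets:
  assumes "bij_betw f A A'" "B \<subseteq> A" "B' \<subseteq> A'" "\<And>x. x \<in> A \<Longrightarrow> f x \<in> B' \<longleftrightarrow> x \<in> B"
  shows "bij_betw f B B'"
proof (rule bij_betw_subset[OF assms(1,2)])
  show "f ` B = B'"
    using assms by (auto simp: bij_betw_def)
qed

lemma mob_adj_iff:
  assumes "a \<in> mob_sq n" "b \<in> mob_sq n"
  shows "mob_adj n a b \<longleftrightarrow> a \<noteq> b \<and> (a = b + 1 \<or> b = a + 1 \<or> a + b = n + 1)"
  using assms unfolding mob_adj_def mob_edges_def mob_sq_def by auto

lemma mob_squares_at_eq:
  assumes "0 < v" "v < n"
  shows "mob_squares_at n v = {v, v + 1, n + 1 - v, n - v}"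
  using assms unfolding mob_squares_at_def mob_sq_def mob_corners_def by auto

lemma card_mob_squares_at_eq_4_iff:
  assumes "0 < v" "v < 2 * k"
  shows "card (mob_squares_at (2 * k) v) = 4 \<longleftrightarrow> v \<noteq> k"
proof (cases "v = k")
  case True
  with assms have "mob_squares_at (2 * k) v = {k, k + 1}"
    by (auto simp: mob_squares_at_eq)
  with True show ?thesis by simp
next
  case False
  with assms show ?thesis by (simp add: mob_squares_at_eq card_insert_if; presburger)
qed

definition unfold_sq :: "nat \<Rightarrow> nat \<times> nat \<Rightarrow> nat" where
  "unfold_sq k p = (if fst p = 1 then snd p else 2 * k + 1 - snd p)"

lemma red_eq: "red k = (\<lambda>c. restrict (c \<circ> unfold_sq k) (grid_sq k))"
  by (intro ext) (auto simp: red_def unfold_sq_def)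

lemma bij_betw_unfold_sq: "bij_betw (unfold_sq k) (grid_sq k) (mob_sq (2 * k))"
  by (rule bij_betw_byWitness[where f' = "\<lambda>m. if m \<le> k then (1, m) else (2, 2 * k + 1 - m)"])
     (auto simp: unfold_sq_def grid_sq_def mob_sq_def)

lemma mob_adj_unfold_sq_iff:
  assumes "p \<in> grid_sq k" "q \<in> grid_sq k"
  shows "mob_adj (2 * k) (unfold_sq k p) (unfold_sq k q) \<longleftrightarrow> grid_adj p q"
proof -
  have "unfold_sq k p \<in> mob_sq (2 * k)" "unfold_sq k q \<in> mob_sq (2 * k)"
    using assms bij_betw_unfold_sq by (auto dest: bij_betw_apply)
  with assms show ?thesis
    by (auto simp: mob_adj_iff unfold_sq_def grid_sq_def grid_adj_def)
qed

lemma mob_four_square_vertices_iff: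
  "(\<forall>v. mob_interior_vertex (2 * k) v \<and> card (mob_squares_at (2 * k) v) = 4 \<longrightarrow>
        P (mob_squares_at (2 * k) v)) \<longleftrightarrow>
   (\<forall>j. 1 \<le> j \<and> j < k \<longrightarrow> P (mob_squares_at (2 * k) j))"
proof (intro iffI allI impI)
  fix j assume "\<forall>v. mob_interior_vertex (2 * k) v \<and> card (mob_squares_at (2 * k) v) = 4 \<longrightarrow>
      P (mob_squares_at (2 * k) v)" and "1 \<le> j \<and> j < k"
  then show "P (mob_squares_at (2 * k) j)"
    by (simp add: mob_interior_vertex_def card_mob_squares_at_eq_4_iff)
next
  fix v assume half: "\<forall>j. 1 \<le> j \<and> j < k \<longrightarrow> P (mob_squares_at (2 * k) j)"
    and "mob_interior_vertex (2 * k) v \<and> card (mob_squares_at (2 * k) v) = 4"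
  then have v: "0 < v" "v < 2 * k" "v \<noteq> k"
    by (auto simp: mob_interior_vertex_def card_mob_squares_at_eq_4_iff)
  define j where "j = min v (2 * k - v)"
  from v have "1 \<le> j" "j < k" by (auto simp: j_def)
  moreover from v have "mob_squares_at (2 * k) j = mob_squares_at (2 * k) v"
    by (auto simp: j_def min_def mob_squares_at_eq)
  ultimately show "P (mob_squares_at (2 * k) v)"
    using half[rule_format, of j] by simp
qed

lemma red_water_block_iff:
  "1 \<le> j \<and> j < k \<and> red k c (1, j) \<and> red k c (2, j) \<and> red k c (1, j + 1) \<and> red k c (2, j + 1) \<longleftrightarrow>
   1 \<le> j \<and> j < k \<and> (\<forall>i \<in> mob_squares_at (2 * k) j. c i)"
  by (auto simp: red_def grid_sq_def mob_squares_at_eq)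

lemma red_mem_Nurikabe_rect_iff:
  assumes "c \<in> mob_sq (2 * k) \<rightarrow>\<^sub>E (UNIV :: bool set)"
  shows "red k c \<in> Nurikabe_rect k \<longleftrightarrow> c \<in> Mobius_box (2 * k)"
proof -
  have "red k c \<in> grid_sq k \<rightarrow>\<^sub>E (UNIV :: bool set)"
    by (auto simp: red_def PiE_def extensional_def)
  moreover have "connected_set grid_adj (water (red k c) (grid_sq k)) \<longleftrightarrow>
      connected_set (mob_adj (2 * k)) (water c (mob_sq (2 * k)))"
    unfolding red_eq water_restrict
    by (rule connected_set_water_compose_iff[OF bij_betw_unfold_sq]) (rule mob_adj_unfold_sq_iff)
  moreover have "(\<forall>v. mob_interior_vertex (2 * k) v \<and> card (mob_squares_at (2 * k) v) = 4 \<longrightarrow>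
        \<not> (\<forall>j \<in> mob_squares_at (2 * k) v. c j)) \<longleftrightarrow>
      \<not> (\<exists>j. 1 \<le> j \<and> j < k \<and> red k c (1, j) \<and> red k c (2, j) \<and> red k c (1, j + 1) \<and> red k c (2, j + 1))"
    unfolding red_water_block_iff
    using mob_four_square_vertices_iff[where P = "\<lambda>S. \<not> (\<forall>i \<in> S. c i)"] by auto
  ultimately show ?thesis
    using assms unfolding Nurikabe_rect_def Mobius_box_def by (simp only: mem_Collect_eq simp_thms)
qed

theorem lemma4p2:
  fixes k :: nat
  assumes "k \<ge> 1"
  shows "bij_betw (red k) (Mobius_box (2 * k)) (Nurikabe_rect k) \<and>
         M_box_num (2 * k) = N_num k"
proof -
  have "bij_betw (red k) (mob_sq (2 * k) \<rightarrow>\<^sub>E (UNIV :: bool set)) (grid_sq k \<rightarrow>\<^sub>E UNIV)"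
    unfolding red_eq by (rule bij_betw_restrict_compose_PiE[OF bij_betw_unfold_sq])
  then have "bij_betw (red k) (Mobius_box (2 * k)) (Nurikabe_rect k)"
  proof (rule bij_betw_subsets)
    show "Mobius_box (2 * k) \<subseteq> mob_sq (2 * k) \<rightarrow>\<^sub>E UNIV"
      by (auto simp: Mobius_box_def)
    show "Nurikabe_rect k \<subseteq> grid_sq k \<rightarrow>\<^sub>E UNIV"
      by (auto simp: Nurikabe_rect_def)
  qed (rule red_mem_Nurikabe_rect_iff)
  then show ?thesis
    unfolding M_box_num_def N_num_def by (simp add: bij_betw_same_card)
qed

end
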